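(* Let $n\ge 1$, let $\mathcal{C}$ be the set of maximal flags of $\mathrm{PG}(n,q)$ and fix a point $X$. For $i,j\in[n+1]$ and any maximal flag $c$ of type $i$ with respect to $X$, the number $Q_{ij}$ of maximal flags of type $j$ with respect to $X$ that are opposite to $c$ equals $$Q_{ij}=\begin{cases}0&\text{if } i+j<n+2,\\ (q-1+\delta_{i+j,n+2})\,q^{\frac12(n^2-n)+j-2}&\text{if } i+j\ge n+2.\end{cases}$$
   Context: A maximal flag of $\mathrm{PG}(n,q)$ (projective space of $\mathbb{F}_q^{n+1}$) is $(U_1,\dots,U_n)$ with $U_1\subset\cdots\subset U_n$ subspaces of $\mathbb{F}_q^{n+1}$, $\dim U_i=i$; set $U_0=0$, $U_{n+1}=\mathbb{F}_q^{n+1}$. Two maximal flags $(U_i)$, $(V_i)$ are opposite if $U_i\cap V_{n+1-i}=0$ for all $i\in[n]$. The type of a maximal flag $(U_1,\dots,U_n)$ with respect to a point (1-dimensional subspace) $X$ is the smallest $k\in[n]$ with $X\subseteq U_k$, and $n+1$ if no such $k$ exists. $\delta$ is the Kronecker delta. *)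

theory Defs
  imports "HOL-Analysis.Analysis"
begin

text \<open>The ambient vector space F_q^(n+1) is modelled as 'a^'m with CARD('m) = n+1,
  over a finite field 'a, with componentwise scalar multiplication.\<close>

definition vscale :: "'a::field \<Rightarrow> 'a^'m \<Rightarrow> 'a^'m" where
  "vscale c x = (\<chi> i. c * x $ i)"

definition lsub :: "('a::field^'m) set \<Rightarrow> bool" where
  "lsub U = module.subspace vscale U"

definition ldim :: "('a::field^'m) set \<Rightarrow> nat" where
  "ldim U = vector_space.dim vscale U"

text \<open>A maximal flag (U_1,...,U_n) is a list F of length n with F!(i-1) = U_i.
  flag_sub F i gives U_i, with U_0 = 0 and U_(n+1) = whole space.\<close>

definition flag_sub :: "('a::field^'m) set list \<Rightarrow> nat \<Rightarrow> ('a^'m) set" where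
  "flag_sub F i = (if i = 0 then {0} else if i \<le> length F then F ! (i - 1) else UNIV)"

definition max_flags :: "nat \<Rightarrow> ('a::field^'m) set list set" where
  "max_flags n = {F. length F = n \<and>
     (\<forall>i\<in>{1..n}. lsub (flag_sub F i) \<and> ldim (flag_sub F i) = i) \<and>
     (\<forall>i\<in>{1..<n}. flag_sub F i \<subseteq> flag_sub F (Suc i))}"

definition opposite :: "('a::field^'m) set list \<Rightarrow> ('a^'m) set list \<Rightarrow> bool" where
  "opposite F G = (\<forall>i\<in>{1..length F}.
      flag_sub F i \<inter> flag_sub G (length F + 1 - i) = {0})"

definition flag_type :: "('a::field^'m) set \<Rightarrow> ('a^'m) set list \<Rightarrow> nat" where
  "flag_type X F = (if \<exists>k\<in>{1..length F}. X \<subseteq> flag_sub F k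
                    then (LEAST k. k \<in> {1..length F} \<and> X \<subseteq> flag_sub F k)
                    else length F + 1)"

definition kdelta :: "nat \<Rightarrow> nat \<Rightarrow> nat" where
  "kdelta a b = (if a = b then 1 else 0)"

end

theory Submission
  imports Defs
begin

(* Build a flag d = (U_1, ..., U_n) opposite to c = (c_1, ..., c_n) from the top, choosing
   U_n, U_(n-1), ..., U_1 in turn. Once V = U_(m+1) is fixed, with V \<inter> c_(n-m) = 0, the
   admissible U_m are the hyperplanes H of V with H \<inter> c_(n+1-m) = 0. By a dimension count V
   meets c_(n+1-m) in a single point P, so these are the q^m hyperplanes of V missing P; those
   through the point X number q^(m-1), or 0 if X lies in c_(n+1-m), that is if i + m \<le> n + 1.
   Type j means that X lies in U_j, ..., U_n but not in U_(j-1), so each level contributes a number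
   of choices independent of the earlier ones, and the count is the product of these numbers. *)

lemma vscale_eq_scale: "vscale = ((*s) :: 'a::field \<Rightarrow> 'a^'m \<Rightarrow> 'a^'m)"
  by (intro ext) (simp add: vscale_def vector_scalar_mult_def)

lemma lsub_eq_subspace: "lsub U = vec.subspace U"
  by (simp add: lsub_def vscale_eq_scale)

lemma ldim_eq_dim: "ldim U = vec.dim U"
  by (simp add: ldim_def vscale_eq_scale)

section \<open>Subspaces of a finite vector space\<close>

lemma card_span_independent:
  fixes B :: "('a::{field,finite}^'m) set"
  assumes "vec.independent B"
  shows "card (vec.span B) = CARD('a) ^ card B"
proof -
  have fin: "finite B" using assms vec.finiteI_independent by blast
  define comb where "comb u = (\<Sum>v\<in>B. u v *s v)" for u :: "'a^'m \<Rightarrow> 'a"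
  have "vec.span B = comb ` UNIV"
    unfolding comb_def using vec.span_finite[OF fin] .
  also have "\<dots> = comb ` (B \<rightarrow>\<^sub>E UNIV)"
  proof (intro equalityI subsetI)
    fix x assume "x \<in> comb ` UNIV"
    then obtain u where "x = comb u" by blast
    moreover have "comb u = comb (restrict u B)" unfolding comb_def by (intro sum.cong) auto
    ultimately show "x \<in> comb ` (B \<rightarrow>\<^sub>E UNIV)"
      by (intro image_eqI[of _ _ "restrict u B"]) auto
  qed auto
  finally have span_eq: "vec.span B = comb ` (B \<rightarrow>\<^sub>E UNIV)" .
  have "inj_on comb (B \<rightarrow>\<^sub>E UNIV)"
  proof (rule inj_onI)
    fix u w assume u: "u \<in> B \<rightarrow>\<^sub>E UNIV" and w: "w \<in> B \<rightarrow>\<^sub>E UNIV" and eq: "comb u = comb w"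
    have "(\<Sum>v\<in>B. (u v - w v) *s v) = comb u - comb w"
      unfolding comb_def by (simp add: vec.scale_left_diff_distrib sum_subtractf)
    then have zero: "(\<Sum>v\<in>B. (u v - w v) *s v) = 0" using eq by simp
    have "u v = w v" if "v \<in> B" for v
      using vec.independentD[where u="\<lambda>v. u v - w v", OF assms fin order_refl zero that] by simp
    then show "u = w" using u w by (intro PiE_ext)
  qed
  then have "card (vec.span B) = card (B \<rightarrow>\<^sub>E (UNIV :: 'a set))"
    unfolding span_eq by (rule card_image)
  also have "\<dots> = CARD('a) ^ card B" by (simp add: card_PiE fin)
  finally show ?thesis .
qed

lemma card_subspace:
  fixes S :: "('a::{field,finite}^'m) set"
  assumes "vec.subspace S"
  shows "card S = CARD('a) ^ vec.dim S"
  by (metis assms card_span_independent vec.basis_exists vec.span_subspace)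

lemma one_less_card_field: "1 < CARD('a::{field,finite})"
proof -
  have "card {0::'a, 1} \<le> CARD('a)" by (rule card_mono) auto
  then show ?thesis by simp
qed

lemma sum_card_filter_commute:
  assumes "finite A" "finite B"
  shows "(\<Sum>a\<in>A. card {b\<in>B. R a b}) = (\<Sum>b\<in>B. card {a\<in>A. R a b})"
proof -
  have "(\<Sum>a\<in>A. card {b\<in>B. R a b}) = (\<Sum>a\<in>A. \<Sum>b\<in>B. if R a b then 1 else 0)"
    using assms by (simp add: sum.inter_filter[symmetric])
  also have "\<dots> = (\<Sum>b\<in>B. \<Sum>a\<in>A. if R a b then 1 else 0)"
    by (rule sum.swap)
  also have "\<dots> = (\<Sum>b\<in>B. card {a\<in>A. R a b})"
    using assms by (simp add: sum.inter_filter[symmetric])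
  finally show ?thesis .
qed

lemma subspace_Int_sums_eq:
  fixes A B V :: "('a::field^'m) set"
  assumes "vec.subspace V" "vec.subspace A" "B \<subseteq> V" "V \<inter> A = {0}"
  shows "V \<inter> {a + b |a b. a \<in> A \<and> b \<in> B} = B"
proof (intro equalityI subsetI)
  fix x assume "x \<in> V \<inter> {a + b |a b. a \<in> A \<and> b \<in> B}"
  then obtain a b where x: "x \<in> V" "a \<in> A" "b \<in> B" "x = a + b" by blast
  then have "a \<in> V" using assms(1,3) vec.subspace_diff[of V x b] by auto
  then have "a = 0" using x(2) assms(4) by blast
  then show "x \<in> B" using x by simp
next
  fix b assume "b \<in> B"
  then show "b \<in> V \<inter> {a + b |a b. a \<in> A \<and> b \<in> B}"
    using assms(2,3) vec.subspace_0 by force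
qed

lemma Int_span_insert_eq_zero:
  fixes A B :: "('a::field^'m) set"
  assumes "vec.subspace A" "vec.subspace B" "A \<inter> B = {0}"
    and x: "x \<notin> {a + b |a b. a \<in> A \<and> b \<in> B}"
  shows "A \<inter> vec.span (insert x B) = {0}"
proof -
  have "y = 0" if y: "y \<in> A" "y \<in> vec.span (insert x B)" for y
  proof -
    have span_B: "vec.span B = B" using assms(2) by (rule vec.span_eq_iff[THEN iffD2])
    obtain k where k: "y - k *s x \<in> B"
      using y(2) unfolding vec.span_insert span_B by blast
    show "y = 0"
    proof (cases "k = 0")
      case True
      then show ?thesis using k y(1) assms(3) by auto
    next
      case False
      have "x = inverse k *s y + (- inverse k) *s (y - k *s x)"
        using False by (simp add: algebra_simps vec.scale_right_diff_distrib)
      moreover have "inverse k *s y \<in> A" using y(1) assms(1) vec.subspace_scale by blast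
      moreover have "(- inverse k) *s (y - k *s x) \<in> B" using k assms(2) vec.subspace_scale by blast
      ultimately show ?thesis using x by blast
    qed
  qed
  moreover have "0 \<in> A \<inter> vec.span (insert x B)"
    using assms(1) vec.subspace_0 vec.span_zero by blast
  ultimately show ?thesis by blast
qed

lemma card_Diff_sums:
  fixes S A B :: "('a::{field,finite}^'m) set"
  assumes "vec.subspace S" "vec.subspace A" "vec.subspace B" "A \<subseteq> S" "B \<subseteq> S"
    and "A \<inter> B = {0}" "vec.dim A + vec.dim B + s = vec.dim S"
  shows "card (S - {a + b |a b. a \<in> A \<and> b \<in> B}) =
    CARD('a) ^ vec.dim A * (CARD('a) ^ (vec.dim B + s) - CARD('a) ^ vec.dim B)"
proof -
  let ?Z = "{a + b |a b. a \<in> A \<and> b \<in> B}"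
  have "vec.subspace ?Z" by (rule vec.subspace_sums[OF assms(2,3)])
  moreover have "vec.dim ?Z = vec.dim A + vec.dim B"
    using vec.dim_sums_Int[OF assms(2,3)] assms(6) by simp
  moreover have "?Z \<subseteq> S"
    using assms(1,4,5) vec.subspace_add by blast
  ultimately have "card (S - ?Z) = CARD('a) ^ (vec.dim A + (vec.dim B + s)) - CARD('a) ^ (vec.dim A + vec.dim B)"
    using card_subspace[of ?Z] card_subspace[OF assms(1)] assms(7)
    by (simp add: card_Diff_subset add.assoc)
  then show ?thesis by (simp add: power_add diff_mult_distrib2 mult_ac)
qed

lemma subspaces_through_point_eq:
  fixes A B S :: "('a::field^'m) set"
  assumes "vec.subspace B" "x \<notin> B"
  shows "{V. vec.subspace V \<and> B \<subseteq> V \<and> V \<subseteq> S \<and> vec.dim V = vec.dim B + Suc t \<and> V \<inter> A = {0} \<and> x \<in> V} =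
    {V. vec.subspace V \<and> vec.span (insert x B) \<subseteq> V \<and> V \<subseteq> S \<and>
      vec.dim V = vec.dim (vec.span (insert x B)) + t \<and> V \<inter> A = {0}}"
proof -
  have "vec.dim (vec.span (insert x B)) = vec.dim B + 1"
    using assms by (simp add: vec.dim_insert vec.span_eq_iff[THEN iffD2])
  moreover have "x \<in> V \<and> B \<subseteq> V \<longleftrightarrow> vec.span (insert x B) \<subseteq> V" if "vec.subspace V" for V
    using that vec.span_minimal[of "insert x B" V] vec.span_superset[of "insert x B"] by auto
  ultimately show ?thesis by auto
qed

text \<open>Double counting of the pairs (x, V) with x \<in> V outside A + B: every such V contains
  q^(dim B + t + 1) - q^(dim B) of them, and every x \<in> S outside A + B lies in q^(dim A * t) of
  the V, by induction applied to span (insert x B).\<close>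

lemma card_subspaces_between_avoiding:
  fixes S A B :: "('a::{field,finite}^'m) set"
  assumes "vec.subspace S" "vec.subspace A" "vec.subspace B" "A \<subseteq> S" "B \<subseteq> S"
    and "A \<inter> B = {0}" "vec.dim A + vec.dim B + t = vec.dim S"
  shows "card {V. vec.subspace V \<and> B \<subseteq> V \<and> V \<subseteq> S \<and> vec.dim V = vec.dim B + t \<and> V \<inter> A = {0}}
    = CARD('a) ^ (vec.dim A * t)"
  using assms
proof (induction t arbitrary: B)
  case 0
  have "V = B" if "vec.subspace V" "B \<subseteq> V" "vec.dim V = vec.dim B" for V
    using vec.subspace_dim_equal[OF \<open>vec.subspace B\<close> that(1,2)] that(3) by simp
  then have "{V. vec.subspace V \<and> B \<subseteq> V \<and> V \<subseteq> S \<and> vec.dim V = vec.dim B + 0 \<and> V \<inter> A = {0}} = {B}"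
    using 0 by (auto simp: Int_commute)
  then show ?case by simp
next
  case (Suc t)
  define q where "q = CARD('a)"
  define VV where "VV = {V. vec.subspace V \<and> B \<subseteq> V \<and> V \<subseteq> S \<and>
    vec.dim V = vec.dim B + Suc t \<and> V \<inter> A = {0}}"
  define Z where "Z = {a + b |a b. a \<in> A \<and> b \<in> B}"
  define D where "D = S - Z"
  have card_D: "card D = q ^ vec.dim A * (q ^ (vec.dim B + Suc t) - q ^ vec.dim B)"
    unfolding D_def Z_def q_def by (rule card_Diff_sums[OF Suc.prems])
  have through_point: "card {V\<in>VV. x \<in> V} = q ^ (vec.dim A * t)" if "x \<in> D" for x
  proof -
    let ?Bx = "vec.span (insert x B)"
    have "B \<subseteq> Z"
      unfolding Z_def using Suc.prems(2) vec.subspace_0 by force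
    then have "x \<in> S" "x \<notin> B"
      using that by (auto simp: D_def)
    then have dim_Bx: "vec.dim ?Bx = vec.dim B + 1"
      using Suc.prems(3) by (simp add: vec.dim_insert vec.span_eq_iff[THEN iffD2])
    have "card {V\<in>VV. x \<in> V} = card {V. vec.subspace V \<and> ?Bx \<subseteq> V \<and> V \<subseteq> S \<and>
        vec.dim V = vec.dim ?Bx + t \<and> V \<inter> A = {0}}"
      using subspaces_through_point_eq[OF Suc.prems(3) \<open>x \<notin> B\<close>] by (simp add: VV_def)
    also have "\<dots> = q ^ (vec.dim A * t)"
      unfolding q_def
    proof (rule Suc.IH)
      show "?Bx \<subseteq> S" using \<open>x \<in> S\<close> Suc.prems(1,5) vec.span_minimal by blast
      show "A \<inter> ?Bx = {0}"
        using Int_span_insert_eq_zero[OF Suc.prems(2,3,6)] that by (simp add: D_def Z_def)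
    qed (use Suc.prems dim_Bx in auto)
    finally show ?thesis .
  qed
  have points_in: "card {x\<in>D. x \<in> V} = q ^ (vec.dim B + Suc t) - q ^ vec.dim B" if "V \<in> VV" for V
  proof -
    have V: "vec.subspace V" "B \<subseteq> V" "V \<subseteq> S" "vec.dim V = vec.dim B + Suc t" "V \<inter> A = {0}"
      using that by (auto simp: VV_def)
    have "{x\<in>D. x \<in> V} = V - B"
      using subspace_Int_sums_eq[OF V(1) Suc.prems(2) V(2,5)] V(3) by (auto simp: D_def Z_def)
    then show ?thesis
      using card_subspace[OF V(1)] card_subspace[OF Suc.prems(3)] V(2,4)
      by (simp add: q_def card_Diff_subset)
  qed
  have "card VV * (q ^ (vec.dim B + Suc t) - q ^ vec.dim B) = (\<Sum>V\<in>VV. card {x\<in>D. x \<in> V})"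
    using points_in by simp
  also have "\<dots> = (\<Sum>x\<in>D. card {V\<in>VV. x \<in> V})"
    by (rule sum_card_filter_commute) simp_all
  also have "\<dots> = q ^ (vec.dim A * Suc t) * (q ^ (vec.dim B + Suc t) - q ^ vec.dim B)"
    using through_point card_D by (simp add: power_add algebra_simps)
  finally have "card VV * (q ^ (vec.dim B + Suc t) - q ^ vec.dim B) =
    q ^ (vec.dim A * Suc t) * (q ^ (vec.dim B + Suc t) - q ^ vec.dim B)" .
  moreover have "q ^ vec.dim B < q ^ (vec.dim B + Suc t)"
    using one_less_card_field[where 'a='a] by (intro power_strict_increasing) (auto simp: q_def)
  ultimately show ?case unfolding VV_def q_def by simp
qed

lemma dim_le_card: "vec.dim (S :: ('a::field^'m) set) \<le> CARD('m)"
  using vec.dim_subset_UNIV[of S] by (simp add: vec.dimension_def card_cart_basis)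

lemma dim_Int_eq_one:
  fixes V U U' :: "('a::field^'m) set"
  assumes "vec.subspace V" "vec.subspace U" "vec.subspace U'" "U' \<subseteq> U"
    and "vec.dim U = vec.dim U' + 1" "V \<inter> U' = {0}" "vec.dim V + vec.dim U = CARD('m) + 1"
  shows "vec.dim (V \<inter> U) = 1"
proof -
  define P where "P = V \<inter> U"
  have P: "vec.subspace P" unfolding P_def using assms(1,2) by (rule vec.subspace_inter)
  have "vec.dim {x + y |x y. x \<in> V \<and> y \<in> U} \<le> CARD('m)" by (rule dim_le_card)
  then have "1 \<le> vec.dim P"
    using vec.dim_sums_Int[OF assms(1,2)] assms(7) unfolding P_def by linarith
  have "{x + y |x y. x \<in> P \<and> y \<in> U'} \<subseteq> U"
    using assms(2,4) vec.subspace_add by (auto simp: P_def)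
  then have "vec.dim {x + y |x y. x \<in> P \<and> y \<in> U'} \<le> vec.dim U" by (rule vec.dim_subset)
  moreover have "vec.dim (P \<inter> U') = 0" using assms(6) by (auto simp: P_def)
  ultimately have "vec.dim P \<le> 1"
    using vec.dim_sums_Int[OF P assms(3)] assms(5) by linarith
  with \<open>1 \<le> vec.dim P\<close> show ?thesis unfolding P_def by simp
qed

lemma line_Int_eq_zero_iff:
  fixes X U :: "('a::field^'m) set"
  assumes X: "vec.subspace X" "vec.dim X = 1" and U: "vec.subspace U"
  shows "X \<inter> U = {0} \<longleftrightarrow> \<not> X \<subseteq> U"
proof
  assume "X \<inter> U = {0}"
  then have "X \<subseteq> U \<Longrightarrow> X \<subseteq> {0}" by blast
  then show "\<not> X \<subseteq> U" using X(2) vec.dim_eq_0[of X] by auto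
next
  assume "\<not> X \<subseteq> U"
  have XU: "vec.subspace (X \<inter> U)" using X(1) U by (rule vec.subspace_inter)
  have "vec.dim (X \<inter> U) \<le> 1" using vec.dim_subset[of "X \<inter> U" X] X(2) by auto
  moreover have "vec.dim (X \<inter> U) \<noteq> 1"
    using vec.subspace_dim_equal[OF XU X(1)] X(2) \<open>\<not> X \<subseteq> U\<close> by auto
  ultimately have "vec.dim (X \<inter> U) = 0" by linarith
  then have "X \<inter> U \<subseteq> {0}" by (rule vec.dim_eq_0[THEN iffD1])
  then show "X \<inter> U = {0}" using vec.subspace_0[OF XU] by blast
qed

section \<open>Maximal flags and their types\<close>

lemma length_max_flags: "d \<in> max_flags n \<Longrightarrow> length d = n"
  by (simp add: max_flags_def)

lemma flag_sub_subspace_dim: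
  fixes d :: "('a::field^'m) set list"
  assumes "d \<in> max_flags n" "CARD('m) = n + 1" "k \<le> n + 1"
  shows "vec.subspace (flag_sub d k) \<and> vec.dim (flag_sub d k) = k"
proof -
  consider "k = 0" | "k \<in> {1..n}" | "k = n + 1" using assms(3) by fastforce
  then show ?thesis
  proof cases
    case 1
    then show ?thesis by (simp add: flag_sub_def vec.subspace_0)
  next
    case 2
    then show ?thesis using assms(1) by (auto simp: max_flags_def lsub_eq_subspace ldim_eq_dim)
  next
    case 3
    then show ?thesis using assms length_max_flags[OF assms(1)]
      by (simp add: flag_sub_def vec.subspace_UNIV card_cart_basis)
  qed
qed

lemma mono_flag_sub:
  fixes d :: "('a::field^'m) set list"
  assumes "d \<in> max_flags n"
  shows "mono (flag_sub d)"
  unfolding mono_iff_le_Suc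
proof
  fix k
  have len: "length d = n" using assms by (rule length_max_flags)
  consider "k = 0" "n = 0" | "k = 0" "n \<noteq> 0" | "k \<in> {1..<n}" | "n \<le> k" by fastforce
  then show "flag_sub d k \<subseteq> flag_sub d (Suc k)"
  proof cases
    case 2
    then have "lsub (flag_sub d 1)" using assms by (simp add: max_flags_def)
    then show ?thesis using 2 by (simp add: flag_sub_def lsub_eq_subspace vec.subspace_0)
  next
    case 3
    then show ?thesis using assms by (simp add: max_flags_def)
  qed (use len in \<open>simp_all add: flag_sub_def\<close>)
qed

lemma flag_type_eq_Least:
  fixes d :: "('a::field^'m) set list"
  assumes d: "d \<in> max_flags n" and X: "\<not> X \<subseteq> {0}"
  shows "flag_type X d = (LEAST k. X \<subseteq> flag_sub d k)"
proof -
  have len: "length d = n" using d by (rule length_max_flags)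
  have not_0: "\<not> X \<subseteq> flag_sub d 0" using X by (simp add: flag_sub_def)
  show ?thesis
  proof (cases "\<exists>k\<in>{1..n}. X \<subseteq> flag_sub d k")
    case True
    then obtain k where k: "k \<in> {1..n}" "X \<subseteq> flag_sub d k" by blast
    have "(LEAST k. X \<subseteq> flag_sub d k) \<in> {1..n}"
      using not_0 k LeastI[of "\<lambda>k. X \<subseteq> flag_sub d k" k] Least_le[of "\<lambda>k. X \<subseteq> flag_sub d k" k]
      by (cases "(LEAST k. X \<subseteq> flag_sub d k) = 0") auto
    then have "(LEAST k. k \<in> {1..n} \<and> X \<subseteq> flag_sub d k) = (LEAST k. X \<subseteq> flag_sub d k)"
      using k LeastI[of "\<lambda>k. X \<subseteq> flag_sub d k" k]
      by (intro Least_equality) (auto intro: Least_le)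
    then show ?thesis using True len by (simp add: flag_type_def)
  next
    case False
    have "(LEAST k. X \<subseteq> flag_sub d k) = n + 1"
    proof (rule Least_equality)
      show "X \<subseteq> flag_sub d (n + 1)" using len by (simp add: flag_sub_def)
      show "n + 1 \<le> k" if "X \<subseteq> flag_sub d k" for k
        using that False not_0 by (cases "k = 0") (auto simp: not_less_eq_eq[symmetric])
    qed
    then show ?thesis using False len by (simp add: flag_type_def)
  qed
qed

lemma subset_flag_sub_iff_flag_type_le:
  fixes d :: "('a::field^'m) set list"
  assumes d: "d \<in> max_flags n" and X: "\<not> X \<subseteq> {0}"
  shows "X \<subseteq> flag_sub d m \<longleftrightarrow> flag_type X d \<le> m"
  unfolding flag_type_eq_Least[OF assms]
proof
  assume "(LEAST k. X \<subseteq> flag_sub d k) \<le> m"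
  moreover have "X \<subseteq> flag_sub d (LEAST k. X \<subseteq> flag_sub d k)"
    by (rule LeastI[of _ "n + 1"]) (simp add: flag_sub_def length_max_flags[OF d])
  ultimately show "X \<subseteq> flag_sub d m" using monoD[OF mono_flag_sub[OF d]] by blast
qed (rule Least_le)

lemma flag_type_eq_iff:
  fixes d :: "('a::field^'m) set list"
  assumes d: "d \<in> max_flags n" and X: "\<not> X \<subseteq> {0}"
  shows "flag_type X d = j \<longleftrightarrow> X \<subseteq> flag_sub d j \<and> \<not> X \<subseteq> flag_sub d (j - 1)"
proof -
  have "\<not> flag_type X d \<le> 0"
    using subset_flag_sub_iff_flag_type_le[OF assms, of 0] X by (simp add: flag_sub_def)
  then show ?thesis
    unfolding subset_flag_sub_iff_flag_type_le[OF assms] by linarith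
qed

section \<open>Opposite flags, level by level\<close>

definition opp_subspaces :: "('a::field^'m) set list \<Rightarrow> nat \<Rightarrow> ('a^'m) set \<Rightarrow> ('a^'m) set set" where
  "opp_subspaces c k V =
    {H. vec.subspace H \<and> vec.dim H = k \<and> H \<subseteq> V \<and> H \<inter> flag_sub c (length c + 1 - k) = {0}}"

lemma card_opp_subspaces_containing:
  fixes c :: "('a::{field,finite}^'m) set list"
  assumes c: "c \<in> max_flags n" "CARD('m) = n + 1" and k: "k \<le> n"
    and V: "vec.subspace V" "vec.dim V = k + 1" "V \<inter> flag_sub c (n - k) = {0}"
    and B: "vec.subspace B" "B \<subseteq> V" "B \<inter> flag_sub c (n + 1 - k) = {0}" "vec.dim B \<le> k"
  shows "card {H \<in> opp_subspaces c k V. B \<subseteq> H} = CARD('a) ^ (k - vec.dim B)"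
proof -
  let ?U = "flag_sub c (n + 1 - k)" and ?U' = "flag_sub c (n - k)"
  define P where "P = V \<inter> ?U"
  have U: "vec.subspace ?U" "vec.dim ?U = n + 1 - k" and U': "vec.subspace ?U'" "vec.dim ?U' = n - k"
    using flag_sub_subspace_dim[OF c] by auto
  have "?U' \<subseteq> ?U" using monoD[OF mono_flag_sub[OF c(1)], of "n - k" "n + 1 - k"] by simp
  then have dim_P: "vec.dim P = 1"
    unfolding P_def using k c(2) V U U' by (intro dim_Int_eq_one) auto
  have P: "vec.subspace P" "P \<subseteq> V" "P \<inter> B = {0}"
    using vec.subspace_inter[OF V(1) U(1)] B(3) vec.subspace_0[OF B(1)] vec.subspace_0[OF V(1)]
    by (auto simp: P_def)
  have "{H \<in> opp_subspaces c k V. B \<subseteq> H} = {H. vec.subspace H \<and> B \<subseteq> H \<and> H \<subseteq> V \<and>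
      vec.dim H = vec.dim B + (k - vec.dim B) \<and> H \<inter> P = {0}}"
    using B(4) length_max_flags[OF c(1)] by (auto simp: opp_subspaces_def P_def)
  also have "card \<dots> = CARD('a) ^ (vec.dim P * (k - vec.dim B))"
    using V(2) B(4) dim_P by (intro card_subspaces_between_avoiding V(1) P B(1,2)) auto
  finally show ?thesis using dim_P by simp
qed

definition nth_or_UNIV :: "'b set list \<Rightarrow> nat \<Rightarrow> 'b set" where
  "nth_or_UNIV ys p = (if p < length ys then ys ! p else UNIV)"

lemma nth_or_UNIV_Cons_0 [simp]: "nth_or_UNIV (H # ys) 0 = H"
  by (simp add: nth_or_UNIV_def)

lemma nth_or_UNIV_Cons_Suc [simp]: "nth_or_UNIV (H # ys) (Suc p) = nth_or_UNIV ys p"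
  by (simp add: nth_or_UNIV_def)

text \<open>ys = [U_k, ..., U_n] lists the members of level at least k of a flag opposite to c, with
  Q m U_m at every level m; thus ys ! p = U_(k+p), and nth_or_UNIV ys (length ys) = U_(n+1) is the
  whole space.\<close>

definition opp_tails :: "('a::field^'m) set list \<Rightarrow> (nat \<Rightarrow> ('a^'m) set \<Rightarrow> bool) \<Rightarrow> nat
    \<Rightarrow> ('a^'m) set list set" where
  "opp_tails c Q k = {ys. length ys = length c + 1 - k \<and> (\<forall>p<length ys.
     ys ! p \<in> opp_subspaces c (k + p) (nth_or_UNIV ys (Suc p)) \<and> Q (k + p) (ys ! p))}"

lemma opp_tails_top: "opp_tails c Q (length c + 1) = {[]}"
  by (auto simp: opp_tails_def)

lemma Cons_mem_opp_tails_iff: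
  assumes "k \<le> length c"
  shows "H # ys \<in> opp_tails c Q k \<longleftrightarrow>
    ys \<in> opp_tails c Q (Suc k) \<and> H \<in> opp_subspaces c k (nth_or_UNIV ys 0) \<and> Q k H"
  using assms by (auto simp: opp_tails_def All_less_Suc2)

lemma opp_tails_eq_Cons_image:
  assumes "k \<le> length c"
  shows "opp_tails c Q k = (\<lambda>(ys, H). H # ys) `
    (SIGMA ys:opp_tails c Q (Suc k). {H \<in> opp_subspaces c k (nth_or_UNIV ys 0). Q k H})"
proof (intro equalityI subsetI)
  fix zs assume zs: "zs \<in> opp_tails c Q k"
  then have "zs \<noteq> []" using assms by (auto simp: opp_tails_def)
  then obtain H ys where "zs = H # ys" by (cases zs) auto
  then show "zs \<in> (\<lambda>(ys, H). H # ys) `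
      (SIGMA ys:opp_tails c Q (Suc k). {H \<in> opp_subspaces c k (nth_or_UNIV ys 0). Q k H})"
    using zs Cons_mem_opp_tails_iff[OF assms] by force
qed (use Cons_mem_opp_tails_iff[OF assms] in auto)

lemma finite_opp_tails: "finite (opp_tails (c :: ('a::{field,finite}^'m) set list) Q k)"
  by (rule finite_subset[OF _ finite_lists_length_eq[of UNIV "length c + 1 - k"]])
    (auto simp: opp_tails_def)

lemma card_opp_tails:
  fixes c :: "('a::{field,finite}^'m) set list"
  assumes "k \<le> length c + 1"
    and "\<And>m ys. k \<le> m \<Longrightarrow> m \<le> length c \<Longrightarrow> ys \<in> opp_tails c Q (Suc m) \<Longrightarrow>
      card {H \<in> opp_subspaces c m (nth_or_UNIV ys 0). Q m H} = f m"
  shows "card (opp_tails c Q k) = (\<Prod>m\<in>{k..length c}. f m)"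
  using assms
proof (induction k rule: inc_induct)
  case base
  then show ?case using opp_tails_top[of c Q] by simp
next
  case (step k)
  have k: "k \<le> length c" using step.hyps(2) by simp
  have "inj_on (\<lambda>(ys, H). H # ys)
      (SIGMA ys:opp_tails c Q (Suc k). {H \<in> opp_subspaces c k (nth_or_UNIV ys 0). Q k H})"
    by (auto simp: inj_on_def)
  then have "card (opp_tails c Q k) = card
      (SIGMA ys:opp_tails c Q (Suc k). {H \<in> opp_subspaces c k (nth_or_UNIV ys 0). Q k H})"
    unfolding opp_tails_eq_Cons_image[OF k] by (rule card_image)
  also have "\<dots> = (\<Sum>ys\<in>opp_tails c Q (Suc k). card {H \<in> opp_subspaces c k (nth_or_UNIV ys 0). Q k H})"
    by (rule card_SigmaI) (simp_all add: finite_opp_tails)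
  also have "\<dots> = (\<Sum>ys\<in>opp_tails c Q (Suc k). f k)"
    using step.prems k by (intro sum.cong) auto
  also have "\<dots> = f k * (\<Prod>m\<in>{Suc k..length c}. f m)"
    using step.IH step.prems by simp
  also have "\<dots> = (\<Prod>m\<in>{k..length c}. f m)"
    using k by (simp add: prod.atLeast_Suc_atMost)
  finally show ?case .
qed

lemma top_of_opp_tail:
  fixes c :: "('a::field^'m) set list"
  assumes c: "c \<in> max_flags n" "CARD('m) = n + 1" and ys: "ys \<in> opp_tails c Q (Suc k)" and k: "k \<le> n"
  shows "vec.subspace (nth_or_UNIV ys 0)" "vec.dim (nth_or_UNIV ys 0) = k + 1"
    "nth_or_UNIV ys 0 \<inter> flag_sub c (n - k) = {0}" "ys \<noteq> [] \<Longrightarrow> Q (Suc k) (nth_or_UNIV ys 0)"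
proof -
  have len_c: "length c = n" using c(1) by (rule length_max_flags)
  have "vec.subspace (nth_or_UNIV ys 0) \<and> vec.dim (nth_or_UNIV ys 0) = k + 1 \<and>
    nth_or_UNIV ys 0 \<inter> flag_sub c (n - k) = {0} \<and> (ys \<noteq> [] \<longrightarrow> Q (Suc k) (nth_or_UNIV ys 0))"
  proof (cases ys)
    case Nil
    then have "k = n" using ys k len_c by (simp add: opp_tails_def)
    then show ?thesis using Nil c(2)
      by (simp add: nth_or_UNIV_def flag_sub_def vec.subspace_UNIV card_cart_basis)
  next
    case (Cons H ys')
    then have "H \<in> opp_subspaces c (Suc k) (nth_or_UNIV ys 1) \<and> Q (Suc k) H"
      using ys unfolding opp_tails_def by force
    then show ?thesis using Cons len_c by (simp add: opp_subspaces_def)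
  qed
  then show "vec.subspace (nth_or_UNIV ys 0)" "vec.dim (nth_or_UNIV ys 0) = k + 1"
    "nth_or_UNIV ys 0 \<inter> flag_sub c (n - k) = {0}" "ys \<noteq> [] \<Longrightarrow> Q (Suc k) (nth_or_UNIV ys 0)"
    by auto
qed

lemma nth_or_UNIV_eq_flag_sub: "nth_or_UNIV d p = flag_sub d (Suc p)"
  by (simp add: nth_or_UNIV_def flag_sub_def)

lemma max_flags_iff_nth:
  fixes d :: "('a::field^'m) set list"
  shows "d \<in> max_flags n \<longleftrightarrow> length d = n \<and>
    (\<forall>p<n. vec.subspace (d ! p) \<and> vec.dim (d ! p) = Suc p \<and> d ! p \<subseteq> nth_or_UNIV d (Suc p))"
proof
  assume d: "d \<in> max_flags n"
  have len: "length d = n" using d by (rule length_max_flags)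
  have "vec.subspace (d ! p) \<and> vec.dim (d ! p) = Suc p \<and> d ! p \<subseteq> nth_or_UNIV d (Suc p)"
    if "p < n" for p
  proof -
    have "d ! p = flag_sub d (Suc p)" using that len by (simp add: flag_sub_def)
    moreover have "lsub (flag_sub d (Suc p)) \<and> ldim (flag_sub d (Suc p)) = Suc p"
      using d that unfolding max_flags_def by auto
    moreover have "flag_sub d (Suc p) \<subseteq> flag_sub d (Suc (Suc p))"
      using monoD[OF mono_flag_sub[OF d]] by simp
    ultimately show ?thesis by (simp add: lsub_eq_subspace ldim_eq_dim nth_or_UNIV_eq_flag_sub)
  qed
  with len show "length d = n \<and>
    (\<forall>p<n. vec.subspace (d ! p) \<and> vec.dim (d ! p) = Suc p \<and> d ! p \<subseteq> nth_or_UNIV d (Suc p))"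
    by blast
next
  assume "length d = n \<and>
    (\<forall>p<n. vec.subspace (d ! p) \<and> vec.dim (d ! p) = Suc p \<and> d ! p \<subseteq> nth_or_UNIV d (Suc p))"
  then have len: "length d = n" and all: "\<And>p. p < n \<Longrightarrow>
      vec.subspace (d ! p) \<and> vec.dim (d ! p) = Suc p \<and> d ! p \<subseteq> nth_or_UNIV d (Suc p)"
    by auto
  show "d \<in> max_flags n"
    unfolding max_flags_def
  proof (intro CollectI conjI ballI len)
    fix i assume i: "i \<in> {1..n}"
    then have "flag_sub d i = d ! (i - 1)" "i - 1 < n" "Suc (i - 1) = i"
      using len by (auto simp: flag_sub_def)
    then show "lsub (flag_sub d i)" "ldim (flag_sub d i) = i"
      using all[of "i - 1"] by (auto simp: lsub_eq_subspace ldim_eq_dim)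
  next
    fix i assume i: "i \<in> {1..<n}"
    then have "flag_sub d i = d ! (i - 1)" "i - 1 < n" "Suc (i - 1) = i"
      using len by (auto simp: flag_sub_def)
    then show "flag_sub d i \<subseteq> flag_sub d (Suc i)"
      using all[of "i - 1"] by (simp add: nth_or_UNIV_eq_flag_sub)
  qed
qed

lemma opposite_iff_nth:
  assumes "length c = n" "length d = n"
  shows "opposite c d \<longleftrightarrow> (\<forall>p<n. d ! p \<inter> flag_sub c (n - p) = {0})"
proof -
  have d_nth: "flag_sub d (n + 1 - i) = d ! (n - i)" if "i \<in> {1..n}" for i
  proof -
    have "n + 1 - i = Suc (n - i)" "n - i < n" using that by auto
    then show ?thesis using assms(2) by (simp add: flag_sub_def)
  qed
  show ?thesis
  proof
    assume opp: "opposite c d"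
    show "\<forall>p<n. d ! p \<inter> flag_sub c (n - p) = {0}"
    proof (intro allI impI)
      fix p assume "p < n"
      then have i: "n - p \<in> {1..n}" and "n - (n - p) = p" by auto
      then show "d ! p \<inter> flag_sub c (n - p) = {0}"
        using bspec[OF opp[unfolded opposite_def assms(1)] i] d_nth[OF i] by (simp add: Int_commute)
    qed
  next
    assume all: "\<forall>p<n. d ! p \<inter> flag_sub c (n - p) = {0}"
    show "opposite c d"
      unfolding opposite_def assms(1)
    proof
      fix i assume i: "i \<in> {1..n}"
      then have "n - i < n" and ni: "n - (n - i) = i" by auto
      then have "d ! (n - i) \<inter> flag_sub c i = {0}" using all ni by metis
      then show "flag_sub c i \<inter> flag_sub d (n + 1 - i) = {0}"
        using d_nth[OF i] by (simp add: Int_commute)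
    qed
  qed
qed

definition type_constraint :: "'b set \<Rightarrow> nat \<Rightarrow> nat \<Rightarrow> 'b set \<Rightarrow> bool" where
  "type_constraint X j m U = (if j \<le> m then X \<subseteq> U else if Suc m = j then \<not> X \<subseteq> U else True)"

lemma flag_type_iff_type_constraint:
  fixes d :: "('a::field^'m) set list"
  assumes d: "d \<in> max_flags n" and X: "\<not> X \<subseteq> {0}" and j: "j \<in> {1..n+1}"
  shows "flag_type X d = j \<longleftrightarrow> (\<forall>p<n. type_constraint X j (Suc p) (d ! p))"
proof -
  have len: "length d = n" using d by (rule length_max_flags)
  have nth: "d ! p = flag_sub d (Suc p)" if "p < n" for p
    using that len by (simp add: flag_sub_def)
  have up: "X \<subseteq> flag_sub d b" if "a \<le> b" "X \<subseteq> flag_sub d a" for a b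
    using that monoD[OF mono_flag_sub[OF d]] by blast
  show ?thesis
    unfolding flag_type_eq_iff[OF d X]
  proof
    assume "X \<subseteq> flag_sub d j \<and> \<not> X \<subseteq> flag_sub d (j - 1)"
    then show "\<forall>p<n. type_constraint X j (Suc p) (d ! p)"
      using up[of j] by (auto simp: type_constraint_def nth)
  next
    assume all: "\<forall>p<n. type_constraint X j (Suc p) (d ! p)"
    have "X \<subseteq> flag_sub d j"
    proof (cases "j \<le> n")
      case True
      then show ?thesis using all[rule_format, of "j - 1"] j nth[of "j - 1"] by (simp add: type_constraint_def)
    qed (use j len in \<open>simp add: flag_sub_def\<close>)
    moreover have "\<not> X \<subseteq> flag_sub d (j - 1)"
    proof (cases "j = 1")
      case False
      then have "j - 2 < n" "Suc (j - 2) = j - 1" "Suc (Suc (j - 2)) = j" using j by auto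
      then show ?thesis
        using all[rule_format, of "j - 2"] nth[of "j - 2"] by (simp add: type_constraint_def)
    qed (use X in \<open>simp add: flag_sub_def\<close>)
    ultimately show "X \<subseteq> flag_sub d j \<and> \<not> X \<subseteq> flag_sub d (j - 1)" ..
  qed
qed

lemma opposite_flags_of_type_eq_opp_tails:
  fixes c :: "('a::field^'m) set list"
  assumes c: "c \<in> max_flags n" and X: "\<not> X \<subseteq> {0}" and j: "j \<in> {1..n+1}"
  shows "{d \<in> max_flags n. flag_type X d = j \<and> opposite c d} = opp_tails c (type_constraint X j) 1"
proof -
  have len_c: "length c = n" using c by (rule length_max_flags)
  have "d \<in> max_flags n \<and> flag_type X d = j \<and> opposite c d \<longleftrightarrow>
      d \<in> opp_tails c (type_constraint X j) 1" for d
  proof (cases "length d = n")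
    case True
    have tails: "d \<in> opp_tails c (type_constraint X j) 1 \<longleftrightarrow>
      (\<forall>p<n. vec.subspace (d ! p) \<and> vec.dim (d ! p) = Suc p \<and> d ! p \<subseteq> nth_or_UNIV d (Suc p)) \<and>
      (\<forall>p<n. d ! p \<inter> flag_sub c (n - p) = {0}) \<and> (\<forall>p<n. type_constraint X j (Suc p) (d ! p))"
      using True len_c by (auto simp: opp_tails_def opp_subspaces_def)
    show ?thesis
      unfolding tails max_flags_iff_nth opposite_iff_nth[OF len_c True, symmetric]
      using flag_type_iff_type_constraint[OF _ X j, of d] True
      by (auto simp: max_flags_iff_nth)
  qed (auto simp: max_flags_def opp_tails_def len_c)
  then show ?thesis by blast
qed

section \<open>Counting opposite flags of a given type\<close>

text \<open>For c of type i and field size q: given U_(m+1), the number of admissible U_m through X, and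
  the number of admissible U_m satisfying the constraint of type j at level m.\<close>

definition through_point_count :: "nat \<Rightarrow> nat \<Rightarrow> nat \<Rightarrow> nat \<Rightarrow> nat" where
  "through_point_count q n i m = (if i + m \<le> n + 1 then 0 else q ^ (m - 1))"

definition level_count :: "nat \<Rightarrow> nat \<Rightarrow> nat \<Rightarrow> nat \<Rightarrow> nat \<Rightarrow> nat" where
  "level_count q n i j m = (if Suc m < j then q ^ m
     else if Suc m = j then q ^ m - through_point_count q n i m
     else through_point_count q n i m)"

lemma card_opp_subspaces_through_point:
  fixes c :: "('a::{field,finite}^'m) set list"
  assumes c: "c \<in> max_flags n" "CARD('m) = n + 1" "flag_type X c = i"
    and X: "vec.subspace X" "vec.dim X = 1" and m: "1 \<le> m" "m \<le> n"
    and V: "vec.subspace V" "vec.dim V = m + 1" "V \<inter> flag_sub c (n - m) = {0}" "X \<subseteq> V"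
  shows "card {H \<in> opp_subspaces c m V. X \<subseteq> H} = through_point_count CARD('a) n i m"
proof -
  let ?U = "flag_sub c (n + 1 - m)"
  have U: "vec.subspace ?U" using flag_sub_subspace_dim[OF c(1,2)] by simp
  have X_nz: "\<not> X \<subseteq> {0}" using X(2) vec.dim_eq_0[of X] by auto
  have type_iff: "X \<subseteq> ?U \<longleftrightarrow> i + m \<le> n + 1"
    using subset_flag_sub_iff_flag_type_le[OF c(1) X_nz] c(3) m(2) by auto
  show ?thesis
  proof (cases "X \<subseteq> ?U")
    case True
    then have "{H \<in> opp_subspaces c m V. X \<subseteq> H} = {}"
      using X_nz length_max_flags[OF c(1)] by (auto simp: opp_subspaces_def)
    then show ?thesis using True type_iff by (simp add: through_point_count_def)
  next
    case False
    then have "X \<inter> ?U = {0}"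
      using line_Int_eq_zero_iff[OF X U] by simp
    then show ?thesis
      using card_opp_subspaces_containing[OF c(1,2) m(2) V(1-3) X(1) V(4)] X(2) m(1) False type_iff
      by (simp add: through_point_count_def)
  qed
qed

lemma card_opp_subspaces_type_constraint:
  fixes c :: "('a::{field,finite}^'m) set list"
  assumes c: "c \<in> max_flags n" "CARD('m) = n + 1" "flag_type X c = i"
    and X: "vec.subspace X" "vec.dim X = 1" and m: "1 \<le> m" "m \<le> n"
    and V: "vec.subspace V" "vec.dim V = m + 1" "V \<inter> flag_sub c (n - m) = {0}"
    and XV: "j \<le> Suc m \<Longrightarrow> X \<subseteq> V"
  shows "card {H \<in> opp_subspaces c m V. type_constraint X j m H} = level_count CARD('a) n i j m"
proof -
  have "vec.subspace (flag_sub c (n + 1 - m))" using flag_sub_subspace_dim[OF c(1,2)] by simp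
  moreover have "{H \<in> opp_subspaces c m V. {0} \<subseteq> H} = opp_subspaces c m V"
    by (auto simp: opp_subspaces_def vec.subspace_0)
  ultimately have all: "card (opp_subspaces c m V) = CARD('a) ^ m"
    using card_opp_subspaces_containing[OF c(1,2) m(2) V, of "{0}"] V(1)
    by (simp add: vec.subspace_0 vec.subspace_single_0)
  note through = card_opp_subspaces_through_point[OF c X m V XV]
  consider "Suc m < j" | "Suc m = j" | "j \<le> m" by linarith
  then show ?thesis
  proof cases
    case 1
    then show ?thesis using all by (simp add: type_constraint_def level_count_def)
  next
    case 2
    have "{H \<in> opp_subspaces c m V. type_constraint X j m H} =
      opp_subspaces c m V - {H \<in> opp_subspaces c m V. X \<subseteq> H}"
      using 2 by (auto simp: type_constraint_def)
    then show ?thesis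
      using 2 all through by (simp add: card_Diff_subset level_count_def)
  next
    case 3
    then show ?thesis using through by (simp add: type_constraint_def level_count_def)
  qed
qed

lemma card_opposite_flags_of_type:
  fixes c :: "('a::{field,finite}^'m) set list"
  assumes c: "c \<in> max_flags n" "CARD('m) = n + 1" "flag_type X c = i"
    and X: "vec.subspace X" "vec.dim X = 1" and j: "j \<in> {1..n+1}"
  shows "card {d \<in> max_flags n. flag_type X d = j \<and> opposite c d} =
    (\<Prod>m\<in>{1..n}. level_count CARD('a) n i j m)"
proof -
  have len_c: "length c = n" using c(1) by (rule length_max_flags)
  have X_nz: "\<not> X \<subseteq> {0}" using X(2) vec.dim_eq_0[of X] by auto
  have level: "card {H \<in> opp_subspaces c m (nth_or_UNIV ys 0). type_constraint X j m H}
      = level_count CARD('a) n i j m"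
    if "1 \<le> m" "m \<le> length c" "ys \<in> opp_tails c (type_constraint X j) (Suc m)" for m ys
  proof (rule card_opp_subspaces_type_constraint[OF c X that(1)])
    show "m \<le> n" using that(2) len_c by simp
    note top = top_of_opp_tail[OF c(1,2) that(3) this]
    show "vec.subspace (nth_or_UNIV ys 0)" "vec.dim (nth_or_UNIV ys 0) = m + 1"
      "nth_or_UNIV ys 0 \<inter> flag_sub c (n - m) = {0}" using top(1-3) .
    show "X \<subseteq> nth_or_UNIV ys 0" if "j \<le> Suc m"
    proof (cases "ys = []")
      case False
      then show ?thesis using top(4) that by (simp add: type_constraint_def)
    qed (simp add: nth_or_UNIV_def)
  qed
  have "card {d \<in> max_flags n. flag_type X d = j \<and> opposite c d} =
      card (opp_tails c (type_constraint X j) 1)"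
    using opposite_flags_of_type_eq_opp_tails[OF c(1) X_nz j] by (rule arg_cong)
  also have "\<dots> = (\<Prod>m\<in>{1..length c}. level_count CARD('a) n i j m)"
    by (rule card_opp_tails[OF _ level]) simp_all
  finally show ?thesis unfolding len_c .
qed

lemma sum_lessThan_nat: "(\<Sum>m<n. m) = (n\<^sup>2 - n) div (2::nat)"
  by (simp add: atLeast0LessThan[symmetric] Sum_Ico_nat power2_eq_square diff_mult_distrib2)

lemma prod_powers_atLeast1_atMost: "(\<Prod>m\<in>{1..K}. (q::nat) ^ m) = q ^ (\<Sum>m<Suc K. m)"
  by (induction K) (simp_all add: power_add)

lemma prod_atLeast1_atMost_powers:
  fixes g :: "nat \<Rightarrow> nat"
  assumes j: "1 \<le> j" "j \<le> N + 1"
    and low: "\<And>m. m + 1 < j \<Longrightarrow> g m = q ^ m" and high: "\<And>m. j \<le> m \<Longrightarrow> g m = q ^ (m - 1)"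
  shows "(\<Prod>m\<in>{1..N}. g m) = q ^ (\<Sum>m<N. m) * (if j = 1 then 1 else g (j - 1))"
proof -
  have "j - 1 \<le> N" using j by simp
  then show ?thesis
  proof (induction N rule: dec_induct)
    case base
    show ?case
    proof (cases "j = 1")
      case False
      then have j': "j - 1 = Suc (j - 2)" using j by simp
      have "(\<Prod>m\<in>{1..j - 2}. g m) = (\<Prod>m\<in>{1..j - 2}. q ^ m)"
        by (rule prod.cong) (use low in auto)
      also have "\<dots> = q ^ (\<Sum>m<j - 1. m)"
        unfolding j' by (rule prod_powers_atLeast1_atMost)
      finally show ?thesis unfolding j' using False by simp
    qed simp
  next
    case (step N)
    then show ?case using high[of "Suc N"] by (simp add: power_add mult_ac)
  qed
qed

lemma prod_level_count:
  fixes q n i j :: nat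
  assumes q: "q \<ge> 1" and i: "i \<in> {1..n+1}" and j: "j \<in> {1..n+1}"
  shows "real (\<Prod>m\<in>{1..n}. level_count q n i j m) =
    (if i + j < n + 2 then 0
     else (real q - 1 + real (kdelta (i + j) (n + 2))) * real q powi (int ((n\<^sup>2 - n) div 2) + int j - 2))"
proof (cases "i + j < n + 2")
  case True
  then have "j \<in> {1..n}" "level_count q n i j j = 0"
    using i j by (auto simp: level_count_def through_point_count_def)
  then show ?thesis using True by (metis of_nat_0 prod_zero_iff finite_atLeastAtMost)
next
  case False
  define T where "T = (n\<^sup>2 - n) div 2"
  have prod: "(\<Prod>m\<in>{1..n}. level_count q n i j m) =
      q ^ T * (if j = 1 then 1 else level_count q n i j (j - 1))"
    unfolding T_def sum_lessThan_nat[symmetric]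
    using i j False by (intro prod_atLeast1_atMost_powers) (auto simp: level_count_def through_point_count_def)
  show ?thesis
  proof (cases "i + j = n + 2")
    case True
    then have "(\<Prod>m\<in>{1..n}. level_count q n i j m) = q ^ T * q ^ (j - 1)"
      using prod j by (auto simp: level_count_def through_point_count_def)
    then have "real (\<Prod>m\<in>{1..n}. level_count q n i j m) = real q ^ (T + (j - 1))"
      by (simp add: power_add)
    also have "\<dots> = real q powi int (T + (j - 1))"
      by (rule power_int_of_nat[symmetric])
    also have "int (T + (j - 1)) = int T + int j - 2 + 1"
      using j by auto
    also have "real q powi (int T + int j - 2 + 1) = real q * real q powi (int T + int j - 2)"
      using q by (intro power_int_add_1') simp
    finally show ?thesis using True by (simp add: kdelta_def T_def)
  next
    case False': False
    define k where "k = j - 2"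
    have k: "j = k + 2" using False False' i unfolding k_def by auto
    then have "(\<Prod>m\<in>{1..n}. level_count q n i j m) = q ^ T * (q ^ (k + 1) - q ^ k)"
      using prod False False' by (simp add: level_count_def through_point_count_def)
    moreover have "q ^ k \<le> q ^ (k + 1)" using q by (intro power_increasing) auto
    ultimately have "real (\<Prod>m\<in>{1..n}. level_count q n i j m) = (real q - 1) * real q ^ (T + k)"
      by (simp add: of_nat_diff power_add algebra_simps)
    also have "\<dots> = (real q - 1) * real q powi int (T + k)"
      by (simp only: power_int_of_nat)
    also have "int (T + k) = int T + int j - 2"
      using k by simp
    finally show ?thesis using False False' by (simp add: kdelta_def T_def)
  qed
qed

theorem mainTheorem3:
  fixes n :: nat and X :: "('a::{field,finite} ^ 'm) set"
    and c :: "('a ^ 'm) set list" and i j :: nat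
  assumes "n \<ge> 1"
    and "CARD('m) = n + 1"
    and "lsub X" and "ldim X = 1"
    and "i \<in> {1..n+1}" and "j \<in> {1..n+1}"
    and "c \<in> max_flags n" and "flag_type X c = i"
  shows "real (card {d \<in> max_flags n. flag_type X d = j \<and> opposite c d}) =
    (if i + j < n + 2 then 0
     else (real CARD('a) - 1 + real (kdelta (i + j) (n + 2)))
          * real CARD('a) powi (int ((n^2 - n) div 2) + int j - 2))"
proof -
  have X: "vec.subspace X" "vec.dim X = 1"
    using assms(3,4) by (simp_all add: lsub_eq_subspace ldim_eq_dim)
  show ?thesis
    unfolding card_opposite_flags_of_type[OF assms(7,2,8) X assms(6)]
    by (rule prod_level_count[OF less_imp_le[OF one_less_card_field] assms(5,6)])
qed

end
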